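(* Let $q=p^m$ with $p$ an odd prime and $m\ge1$, and suppose $q\equiv 1\pmod 6$. Then the power function $f(x)=x^{q+2}$ on $\mathbb{F}_{q^2}$ satisfies $\beta_f\le 5$.
   Context: For $f:\mathbb{F}_{q^2}\to\mathbb{F}_{q^2}$ and $a,b\in\mathbb{F}_{q^2}$, $\beta_f(a,b)$ is the number of $(x,y)\in\mathbb{F}_{q^2}^2$ with $f(x)-f(y)=b$ and $f(x+a)-f(y+a)=b$; the boomerang uniformity is $\beta_f=\max_{a,b\in\mathbb{F}_{q^2}^*}\beta_f(a,b)$. *)

theory Defs
  imports Main "HOL-Computational_Algebra.Primes"
begin

definition boomerang_count :: "('a::field \<Rightarrow> 'a) \<Rightarrow> 'a \<Rightarrow> 'a \<Rightarrow> nat" where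
  "boomerang_count f a b =
     card {(x, y). f x - f y = b \<and> f (x + a) - f (y + a) = b}"

definition boomerang_uniformity :: "('a::{field,finite} \<Rightarrow> 'a) \<Rightarrow> nat" where
  "boomerang_uniformity f =
     Max {boomerang_count f a b | a b. a \<noteq> 0 \<and> b \<noteq> 0}"

end

theory Submission
  imports Defs "HOL-Number_Theory.Residues" "HOL-Computational_Algebra.Polynomial"
begin

text \<open>
  Let \<open>\<sigma> x = x ^ q\<close> be the Frobenius involution of the field with \<open>q\<^sup>2\<close> elements, so
  \<open>f x = \<sigma> x * x\<^sup>2\<close>. As \<open>f (a * x) = \<sigma> a * a\<^sup>2 * f x\<close>, it suffices to take \<open>a = 1\<close>
  and some \<open>\<beta> \<noteq> 0\<close> for \<open>b\<close>. For a solution \<open>(x, y)\<close> put \<open>u = x - y \<noteq> 0\<close> and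
  \<open>v = x + y + 1\<close>; subtracting the two equations gives \<open>v * (u + \<sigma> u) + u * \<sigma> v = 0\<close>, and
  multiplying this with its conjugate forces \<open>v = 0\<close> unless \<open>u\<^sup>2 + u * \<sigma> u + (\<sigma> u)\<^sup>2 = 0\<close>.
  The latter would make \<open>\<sigma> u / u\<close> a cube root of unity \<open>t \<noteq> 1\<close> with \<open>t ^ (q + 1) = 1\<close>,
  impossible as \<open>q mod 3 = 1\<close>. Hence \<open>y = - x - 1\<close>, and \<open>w = 2 * x + 1\<close> solves
  \<open>\<sigma> w * (w\<^sup>2 + 1) + 2 * w = c\<close> with \<open>c = 4 * \<beta>\<close>.

  Eliminating \<open>\<sigma> w\<close> from this equation and its conjugate expresses \<open>w\<close> through its norm
  \<open>N = w * \<sigma> w\<close> as \<open>w * (N + 1) * (N + 3) = c * (N + 2) - \<sigma> c\<close>, and taking norms shows that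
  \<open>N\<close> is a root of a quintic. So there are at most five solutions with \<open>N \<notin> {-1, -3}\<close>. A
  solution with \<open>N = -1\<close> (resp. \<open>N = -3\<close>) forces \<open>\<sigma> c = c\<close> (resp. \<open>\<sigma> c = - c\<close>); then
  there are at most two such solutions, roots of a quadratic, while the quintic acquires the
  double root \<open>-1\<close> (resp. \<open>-3\<close>), leaving at most three other solutions.
\<close>

lemma card_le_degree_if_inj_on_roots:
  fixes P :: "'a::idom poly"
  assumes "P \<noteq> 0" "inj_on g A" "\<And>x. x \<in> A \<Longrightarrow> poly P (g x) = 0"
  shows "card A \<le> degree P"
proof -
  have "card A = card (g ` A)"
    using assms(2) by (simp add: card_image)
  also have "\<dots> \<le> card {x. poly P x = 0}"
    by (rule card_mono[OF poly_roots_finite[OF assms(1)]]) (use assms(3) in auto)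
  also have "\<dots> \<le> degree P"
    by (rule card_poly_roots_bound[OF assms(1)])
  finally show ?thesis .
qed

lemma finite_if_inj_on_roots:
  fixes P :: "'a::idom poly"
  assumes "P \<noteq> 0" "inj_on g A" "\<And>x. x \<in> A \<Longrightarrow> poly P (g x) = 0"
  shows "finite A"
  by (rule inj_on_finite[OF assms(2) _ poly_roots_finite[OF assms(1)]]) (use assms(3) in auto)

lemma boomerang_uniformity_le:
  fixes f :: "'a::{field,finite} \<Rightarrow> 'a"
  assumes "\<And>a b. a \<noteq> 0 \<Longrightarrow> b \<noteq> 0 \<Longrightarrow> boomerang_count f a b \<le> n"
  shows "boomerang_uniformity f \<le> n"
proof -
  let ?M = "{boomerang_count f a b | a b. a \<noteq> 0 \<and> b \<noteq> 0}"
  have "?M \<subseteq> {..n}"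
    using assms by auto
  moreover have "boomerang_count f 1 1 \<in> ?M"
    by (intro CollectI exI[of _ "1::'a"]) simp
  ultimately show ?thesis
    unfolding boomerang_uniformity_def by (intro Max.boundedI) (auto dest: finite_subset)
qed

lemma boomerang_count_homogeneous:
  fixes f :: "'a::field \<Rightarrow> 'a"
  assumes hom: "\<And>x. f (a * x) = k * f x" and "a \<noteq> 0" "k \<noteq> 0"
  shows "boomerang_count f a b = boomerang_count f 1 (b / k)"
proof -
  let ?S = "\<lambda>a b. {(x, y). f x - f y = b \<and> f (x + a) - f (y + a) = b}"
  have shift: "f (a * x + a) = k * f (x + 1)" for x
    using hom[of "x + 1"] by (simp add: distrib_left)
  have "?S a b = (\<lambda>(x, y). (a * x, a * y)) ` ?S 1 (b / k)"
  proof (intro equalityI subsetI)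
    fix z assume "z \<in> ?S a b"
    then obtain x y where z: "z = (x, y)" "f x - f y = b" "f (x + a) - f (y + a) = b"
      by auto
    have x: "x = a * (x / a)" and y: "y = a * (y / a)"
      using \<open>a \<noteq> 0\<close> by simp_all
    have "(x / a, y / a) \<in> ?S 1 (b / k)"
      using z(2,3) hom[of "x / a"] hom[of "y / a"] shift[of "x / a"] shift[of "y / a"] x y \<open>k \<noteq> 0\<close>
      by (auto simp: field_simps)
    then show "z \<in> (\<lambda>(x, y). (a * x, a * y)) ` ?S 1 (b / k)"
      using z(1) x y by (auto intro: image_eqI[of _ _ "(x / a, y / a)"])
  next
    fix z assume "z \<in> (\<lambda>(x, y). (a * x, a * y)) ` ?S 1 (b / k)"
    then show "z \<in> ?S a b"
      using hom shift \<open>k \<noteq> 0\<close> by (auto simp: field_simps right_diff_distrib[symmetric])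
  qed
  moreover have "inj (\<lambda>(x, y). (a * x, a * y))"
    using \<open>a \<noteq> 0\<close> by (auto intro: injI)
  ultimately show ?thesis
    unfolding boomerang_count_def by (simp add: card_image inj_on_subset)
qed

section \<open>The norm equation\<close>

lemma norm_equation_quintic:
  fixes N c d :: "'a::comm_ring_1"
  assumes "N * ((N + 1) * (N + 3))\<^sup>2 = (c * (N + 2) - d) * (d * (N + 2) - c)"
  shows "poly [:-(5*(c*d) - 2*c\<^sup>2 - 2*d\<^sup>2), 9 - (4*(c*d) - c\<^sup>2 - d\<^sup>2), 24 - c*d, 22, 8, 1:] N = 0"
  using assms by (simp add: algebra_simps power2_eq_square numeral_eq_Suc)

lemma norm_equation_cubic_fixed:
  fixes N c :: "'a::idom"
  assumes "N * ((N + 1) * (N + 3))\<^sup>2 = (c * (N + 2) - c) * (c * (N + 2) - c)" "N \<noteq> -1"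
  shows "poly [:-(c\<^sup>2), 9, 6, 1:] N = 0"
proof -
  have "(N + 1)\<^sup>2 * poly [:-(c\<^sup>2), 9, 6, 1:] N = 0"
    using assms(1) by (simp add: algebra_simps power2_eq_square numeral_eq_Suc)
  then show ?thesis
    using assms(2) by (simp add: add_eq_0_iff2)
qed

lemma norm_equation_cubic_antifixed:
  fixes N c :: "'a::idom"
  assumes "N * ((N + 1) * (N + 3))\<^sup>2 = (c * (N + 2) - - c) * (- c * (N + 2) - c)" "N \<noteq> -3"
  shows "poly [:c\<^sup>2, 1, 2, 1:] N = 0"
proof -
  have "(N + 3)\<^sup>2 * poly [:c\<^sup>2, 1, 2, 1:] N = 0"
    using assms(1) by (simp add: algebra_simps power2_eq_square numeral_eq_Suc)
  then show ?thesis
    using assms(2) by (simp add: add_eq_0_iff2)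
qed

locale field_involution =
  fixes \<sigma> :: "'a::field \<Rightarrow> 'a"
  assumes hom_add [simp]: "\<sigma> (x + y) = \<sigma> x + \<sigma> y"
    and hom_mult [simp]: "\<sigma> (x * y) = \<sigma> x * \<sigma> y"
    and hom_one [simp]: "\<sigma> 1 = 1"
    and involutive [simp]: "\<sigma> (\<sigma> x) = x"
begin

lemma hom_zero [simp]: "\<sigma> 0 = 0"
  by (metis add_cancel_right_right add_0 hom_add)

lemma hom_uminus [simp]: "\<sigma> (- x) = - \<sigma> x"
  using hom_add[of x "- x"] by (simp add: eq_neg_iff_add_eq_0 add.commute)

lemma hom_diff [simp]: "\<sigma> (x - y) = \<sigma> x - \<sigma> y"
  using hom_add[of x "- y"] by simp

lemma hom_of_nat [simp]: "\<sigma> (of_nat n) = of_nat n"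
  by (induction n) simp_all

lemma hom_numeral [simp]: "\<sigma> (numeral n) = numeral n"
  using hom_of_nat[of "numeral n"] by simp

lemma hom_power [simp]: "\<sigma> (x ^ n) = \<sigma> x ^ n"
  by (induction n) simp_all

lemma hom_eq_0_iff [simp]: "\<sigma> x = 0 \<longleftrightarrow> x = 0"
  by (metis involutive hom_zero)

definition fnorm :: "'a \<Rightarrow> 'a" where
  "fnorm u = u * \<sigma> u"

lemma hom_fnorm [simp]: "\<sigma> (fnorm u) = fnorm u"
  by (simp add: fnorm_def mult.commute)

definition reduced_solutions :: "'a \<Rightarrow> 'a set" where
  "reduced_solutions c = {u. \<sigma> u * (u\<^sup>2 + 1) + 2 * u = c}"

definition generic_solutions :: "'a \<Rightarrow> 'a set" where
  "generic_solutions c = {u \<in> reduced_solutions c. fnorm u \<noteq> -1 \<and> fnorm u \<noteq> -3}"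

lemma reduced_solution_by_fnorm:
  assumes "u \<in> reduced_solutions c"
  shows "u * ((fnorm u + 1) * (fnorm u + 3)) = c * (fnorm u + 2) - \<sigma> c"
proof -
  let ?N = "fnorm u"
  have eq: "u * (?N + 2) + \<sigma> u = c"
    using assms unfolding reduced_solutions_def fnorm_def by (simp add: algebra_simps power2_eq_square)
  then have "\<sigma> c = \<sigma> u * (?N + 2) + u"
    by auto
  also have "\<sigma> u = c - u * (?N + 2)"
    unfolding eq[symmetric] by simp
  finally show ?thesis
    by (simp add: algebra_simps)
qed

lemma reduced_solution_fnorm_equation:
  assumes "u \<in> reduced_solutions c"
  shows "fnorm u * ((fnorm u + 1) * (fnorm u + 3))\<^sup>2 = (c * (fnorm u + 2) - \<sigma> c) * (\<sigma> c * (fnorm u + 2) - c)"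
proof -
  let ?M = "(fnorm u + 1) * (fnorm u + 3)"
  have lhs: "u * ?M = c * (fnorm u + 2) - \<sigma> c"
    using reduced_solution_by_fnorm[OF assms] .
  then have "\<sigma> (u * ?M) = \<sigma> (c * (fnorm u + 2) - \<sigma> c)"
    by (rule arg_cong)
  then have rhs: "\<sigma> u * ?M = \<sigma> c * (fnorm u + 2) - c"
    by simp
  have "fnorm u * ?M\<^sup>2 = (u * ?M) * (\<sigma> u * ?M)"
    by (simp add: fnorm_def power2_eq_square ac_simps)
  then show ?thesis
    unfolding lhs rhs .
qed

lemma inj_on_fnorm_generic_solutions: "inj_on fnorm (generic_solutions c)"
proof (rule inj_onI)
  fix u w assume u: "u \<in> generic_solutions c" and w: "w \<in> generic_solutions c"
    and eq: "fnorm u = fnorm w"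
  have "u * ((fnorm u + 1) * (fnorm u + 3)) = w * ((fnorm u + 1) * (fnorm u + 3))"
    using reduced_solution_by_fnorm[of u c] reduced_solution_by_fnorm[of w c] u w
    unfolding eq generic_solutions_def by simp
  moreover have "(fnorm u + 1) * (fnorm u + 3) \<noteq> 0"
    using u by (simp add: generic_solutions_def add_eq_0_iff2)
  ultimately show "u = w"
    by simp
qed

lemma generic_solutions_bounded_by_degree:
  assumes "P \<noteq> 0"
    and roots: "\<And>N. N \<noteq> -1 \<Longrightarrow> N \<noteq> -3 \<Longrightarrow>
      N * ((N + 1) * (N + 3))\<^sup>2 = (c * (N + 2) - \<sigma> c) * (\<sigma> c * (N + 2) - c) \<Longrightarrow> poly P N = 0"
  shows "finite (generic_solutions c)" and "card (generic_solutions c) \<le> degree P"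
proof -
  have root: "poly P (fnorm u) = 0" if "u \<in> generic_solutions c" for u
    using that by (intro roots reduced_solution_fnorm_equation) (simp_all add: generic_solutions_def)
  show "finite (generic_solutions c)"
    by (rule finite_if_inj_on_roots[OF \<open>P \<noteq> 0\<close> inj_on_fnorm_generic_solutions root])
  show "card (generic_solutions c) \<le> degree P"
    by (rule card_le_degree_if_inj_on_roots[OF \<open>P \<noteq> 0\<close> inj_on_fnorm_generic_solutions root])
qed

lemma finite_generic_solutions: "finite (generic_solutions c)"
  and card_generic_solutions_le: "card (generic_solutions c) \<le> 5"
proof -
  let ?d = "\<sigma> c"
  let ?P = "[:-(5*(c*?d) - 2*c\<^sup>2 - 2*?d\<^sup>2), 9 - (4*(c*?d) - c\<^sup>2 - ?d\<^sup>2), 24 - c*?d, 22, 8, 1:]"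
  show "finite (generic_solutions c)"
    by (intro generic_solutions_bounded_by_degree(1)[of ?P] norm_equation_quintic) simp_all
  have "card (generic_solutions c) \<le> degree ?P"
    by (intro generic_solutions_bounded_by_degree(2) norm_equation_quintic) simp_all
  then show "card (generic_solutions c) \<le> 5"
    by simp
qed

lemma card_generic_solutions_le_if_fixed:
  assumes "\<sigma> c = c"
  shows "card (generic_solutions c) \<le> 3"
proof -
  have "card (generic_solutions c) \<le> degree [:-(c\<^sup>2), 9, 6, 1:]"
    by (intro generic_solutions_bounded_by_degree norm_equation_cubic_fixed) (simp_all add: assms)
  then show ?thesis
    by simp
qed

lemma card_generic_solutions_le_if_antifixed:
  assumes "\<sigma> c = - c"
  shows "card (generic_solutions c) \<le> 3"
proof -
  have "card (generic_solutions c) \<le> degree [:c\<^sup>2, 1, 2, 1:]"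
    by (intro generic_solutions_bounded_by_degree norm_equation_cubic_antifixed) (simp_all add: assms)
  then show ?thesis
    by simp
qed

lemma reduced_solution_fnorm_minus_one:
  assumes "u \<in> reduced_solutions c" "fnorm u = -1"
  shows "\<sigma> c = c" and "poly [:-1, -c, 1:] u = 0"
proof -
  show "\<sigma> c = c"
    using reduced_solution_by_fnorm[OF assms(1)] assms(2) by simp
  have "u + \<sigma> u = c"
    using assms unfolding reduced_solutions_def fnorm_def by (simp add: algebra_simps power2_eq_square)
  then show "poly [:-1, -c, 1:] u = 0"
    using assms(2) unfolding fnorm_def by (auto simp: algebra_simps power2_eq_square)
qed

lemma reduced_solution_fnorm_minus_three:
  assumes "u \<in> reduced_solutions c" "fnorm u = -3"
  shows "\<sigma> c = - c" and "poly [:3, c, 1:] u = 0"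
proof -
  show "\<sigma> c = - c"
    using reduced_solution_by_fnorm[OF assms(1)] assms(2) by simp
  have "\<sigma> u - u = c"
    using assms unfolding reduced_solutions_def fnorm_def by (simp add: algebra_simps power2_eq_square)
  then show "poly [:3, c, 1:] u = 0"
    using assms(2) unfolding fnorm_def by (auto simp: algebra_simps power2_eq_square)
qed

lemma reduced_solutions_decomp:
  "reduced_solutions c = {u \<in> reduced_solutions c. fnorm u = -1}
     \<union> {u \<in> reduced_solutions c. fnorm u = -3} \<union> generic_solutions c"
  by (auto simp: generic_solutions_def)

lemma card_fnorm_minus_one_solutions_le: "card {u \<in> reduced_solutions c. fnorm u = -1} \<le> 2"
  and finite_fnorm_minus_one_solutions: "finite {u \<in> reduced_solutions c. fnorm u = -1}"
proof -
  let ?U = "{u \<in> reduced_solutions c. fnorm u = -1}"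
  have roots: "poly [:-1, -c, 1:] (id u) = 0" if "u \<in> ?U" for u
    using that reduced_solution_fnorm_minus_one(2) by simp
  show "card ?U \<le> 2"
    using card_le_degree_if_inj_on_roots[of "[:-1, -c, 1:]" id ?U] roots by simp
  show "finite ?U"
    using finite_if_inj_on_roots[of "[:-1, -c, 1:]" id ?U] roots by simp
qed

lemma card_fnorm_minus_three_solutions_le: "card {u \<in> reduced_solutions c. fnorm u = -3} \<le> 2"
  and finite_fnorm_minus_three_solutions: "finite {u \<in> reduced_solutions c. fnorm u = -3}"
proof -
  let ?U = "{u \<in> reduced_solutions c. fnorm u = -3}"
  have roots: "poly [:3, c, 1:] (id u) = 0" if "u \<in> ?U" for u
    using that reduced_solution_fnorm_minus_three(2) by simp
  show "card ?U \<le> 2"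
    using card_le_degree_if_inj_on_roots[of "[:3, c, 1:]" id ?U] roots by simp
  show "finite ?U"
    using finite_if_inj_on_roots[of "[:3, c, 1:]" id ?U] roots by simp
qed

lemma finite_reduced_solutions: "finite (reduced_solutions c)"
  by (subst reduced_solutions_decomp)
    (simp add: finite_fnorm_minus_one_solutions finite_fnorm_minus_three_solutions finite_generic_solutions)

lemma card_reduced_solutions_le:
  assumes "(2::'a) \<noteq> 0" "c \<noteq> 0"
  shows "card (reduced_solutions c) \<le> 5"
proof -
  let ?U1 = "{u \<in> reduced_solutions c. fnorm u = -1}"
  let ?U3 = "{u \<in> reduced_solutions c. fnorm u = -3}"
  have bound: "card (reduced_solutions c) \<le> card ?U1 + card ?U3 + card (generic_solutions c)"
    by (subst reduced_solutions_decomp) (meson card_Un_le add_le_mono1 order_trans)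
  have "c \<noteq> - c"
    using assms by (metis add_eq_0_iff2 mult_2 mult_eq_0_iff)
  moreover have "\<sigma> c = c" if "?U1 \<noteq> {}"
    using that reduced_solution_fnorm_minus_one(1) by blast
  moreover have "\<sigma> c = - c" if "?U3 \<noteq> {}"
    using that reduced_solution_fnorm_minus_three(1) by blast
  ultimately consider "?U1 = {}" "?U3 = {}" | "\<sigma> c = c" "?U3 = {}" | "\<sigma> c = - c" "?U1 = {}"
    by metis
  then show ?thesis
    using bound card_fnorm_minus_one_solutions_le[of c] card_fnorm_minus_three_solutions_le[of c] card_generic_solutions_le[of c]
      card_generic_solutions_le_if_fixed[of c] card_generic_solutions_le_if_antifixed[of c]
    by cases simp_all
qed

definition anisotropic :: bool where
  "anisotropic \<longleftrightarrow> (\<forall>u. u \<noteq> 0 \<longrightarrow> u\<^sup>2 + u * \<sigma> u + (\<sigma> u)\<^sup>2 \<noteq> 0)"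

lemma eq_0_if_anisotropic:
  assumes "anisotropic" "u \<noteq> 0" and rel: "v * (u + \<sigma> u) + u * \<sigma> v = 0"
  shows "v = 0"
proof (rule ccontr)
  assume "v \<noteq> 0"
  have "\<sigma> (v * (u + \<sigma> u) + u * \<sigma> v) = \<sigma> 0"
    using rel by (rule arg_cong)
  then have "\<sigma> v * (u + \<sigma> u) + \<sigma> u * v = 0"
    by (simp only: hom_add hom_mult involutive hom_zero add.commute[of "\<sigma> u"])
  then have "\<sigma> u * v = - (\<sigma> v * (u + \<sigma> u))" and "u * \<sigma> v = - (v * (u + \<sigma> u))"
    using rel by (simp_all only: add_eq_0_iff)
  then have "(u * \<sigma> u) * (v * \<sigma> v) = (u + \<sigma> u)\<^sup>2 * (v * \<sigma> v)"
    by (metis (no_types, lifting) minus_mult_minus mult.assoc mult.commute power2_eq_square)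
  then have "u * \<sigma> u = (u + \<sigma> u)\<^sup>2"
    using \<open>v \<noteq> 0\<close> by simp
  then have "u\<^sup>2 + u * \<sigma> u + (\<sigma> u)\<^sup>2 = 0"
    by (simp add: algebra_simps power2_eq_square)
  then show False
    using assms(1,2) unfolding anisotropic_def by blast
qed

lemma boomerang_pair_antipodal:
  assumes "anisotropic" "\<beta> \<noteq> 0"
    and eq0: "\<sigma> x * x\<^sup>2 - \<sigma> y * y\<^sup>2 = \<beta>"
    and eq1: "\<sigma> (x + 1) * (x + 1)\<^sup>2 - \<sigma> (y + 1) * (y + 1)\<^sup>2 = \<beta>"
  shows "y = - x - 1"
proof -
  have "x - y \<noteq> 0"
    using eq0 \<open>\<beta> \<noteq> 0\<close> by auto
  have "0 = (\<sigma> (x + 1) * (x + 1)\<^sup>2 - \<sigma> (y + 1) * (y + 1)\<^sup>2) - (\<sigma> x * x\<^sup>2 - \<sigma> y * y\<^sup>2)"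
    using eq0 eq1 by simp
  also have "\<dots> = (x + y + 1) * ((x - y) + \<sigma> (x - y)) + (x - y) * \<sigma> (x + y + 1)"
    by (simp add: algebra_simps power2_eq_square)
  finally have "(x + y + 1) * ((x - y) + \<sigma> (x - y)) + (x - y) * \<sigma> (x + y + 1) = 0"
    by (rule sym)
  then have "x + y + 1 = 0"
    by (rule eq_0_if_anisotropic[OF \<open>anisotropic\<close> \<open>x - y \<noteq> 0\<close>])
  moreover have "y = (x + y + 1) - x - 1"
    by (simp add: algebra_simps)
  ultimately show ?thesis
    by simp
qed

lemma boomerang_reduced_solution:
  assumes "\<sigma> x * x\<^sup>2 + \<sigma> (x + 1) * (x + 1)\<^sup>2 = \<beta>"
  shows "2 * x + 1 \<in> reduced_solutions (4 * \<beta>)"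
  unfolding reduced_solutions_def assms[symmetric] by (simp add: algebra_simps power2_eq_square)

lemma boomerang_count_one_le:
  assumes "anisotropic" "(2::'a) \<noteq> 0" "\<beta> \<noteq> 0"
  shows "boomerang_count (\<lambda>x. \<sigma> x * x\<^sup>2) 1 \<beta> \<le> 5"
proof -
  let ?S = "{(x, y). \<sigma> x * x\<^sup>2 - \<sigma> y * y\<^sup>2 = \<beta> \<and>
    \<sigma> (x + 1) * (x + 1)\<^sup>2 - \<sigma> (y + 1) * (y + 1)\<^sup>2 = \<beta>}"
  have "?S \<subseteq> (\<lambda>w. ((w - 1) / 2, - (w + 1) / 2)) ` reduced_solutions (4 * \<beta>)"
  proof
    fix z assume "z \<in> ?S"
    then obtain x y where z: "z = (x, y)"
      and eq0: "\<sigma> x * x\<^sup>2 - \<sigma> y * y\<^sup>2 = \<beta>"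
      and eq1: "\<sigma> (x + 1) * (x + 1)\<^sup>2 - \<sigma> (y + 1) * (y + 1)\<^sup>2 = \<beta>"
      by auto
    have y: "y = - x - 1"
      using boomerang_pair_antipodal[OF assms(1,3) eq0 eq1] .
    have "\<sigma> x * x\<^sup>2 + \<sigma> (x + 1) * (x + 1)\<^sup>2 = \<beta>"
      using eq0 unfolding y by (simp add: algebra_simps power2_eq_square)
    then have "2 * x + 1 \<in> reduced_solutions (4 * \<beta>)"
      by (rule boomerang_reduced_solution)
    moreover have "z = ((2 * x + 1 - 1) / 2, - (2 * x + 1 + 1) / 2)"
      using z y \<open>(2::'a) \<noteq> 0\<close> by (simp add: field_simps)
    ultimately show "z \<in> (\<lambda>w. ((w - 1) / 2, - (w + 1) / 2)) ` reduced_solutions (4 * \<beta>)"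
      by blast
  qed
  then have "card ?S \<le> card (reduced_solutions (4 * \<beta>))"
    by (rule surj_card_le[OF finite_reduced_solutions])
  also have "\<dots> \<le> 5"
  proof (rule card_reduced_solutions_le)
    have "4 * \<beta> = 2 * (2 * \<beta>)"
      by simp
    then show "4 * \<beta> \<noteq> 0"
      using assms(2,3) by (simp only: mult_eq_0_iff) simp
  qed fact
  finally show ?thesis
    unfolding boomerang_count_def by simp
qed

lemma boomerang_count_le:
  assumes "anisotropic" "(2::'a) \<noteq> 0" "a \<noteq> 0" "b \<noteq> 0"
  shows "boomerang_count (\<lambda>x. \<sigma> x * x\<^sup>2) a b \<le> 5"
proof -
  have "boomerang_count (\<lambda>x. \<sigma> x * x\<^sup>2) a b = boomerang_count (\<lambda>x. \<sigma> x * x\<^sup>2) 1 (b / (\<sigma> a * a\<^sup>2))"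
    using \<open>a \<noteq> 0\<close> by (intro boomerang_count_homogeneous) (simp_all add: power_mult_distrib ac_simps)
  also have "\<dots> \<le> 5"
    using assms by (intro boomerang_count_one_le) simp_all
  finally show ?thesis .
qed

end

section \<open>The Frobenius involution of a finite field\<close>

lemma power_card_UNIV_eq_self:
  fixes x :: "'a::{field,finite}"
  shows "x ^ card (UNIV :: 'a set) = x"
proof (cases "x = 0")
  case False
  have "x * (\<Prod>y\<in>UNIV-{0}. x * y) = x * x ^ (card (UNIV :: 'a set) - 1) * \<Prod>(UNIV-{0})"
    by (simp add: prod.distrib mult_ac)
  also have "x * x ^ (card (UNIV :: 'a set) - 1) = x ^ card (UNIV :: 'a set)"
    using finite_UNIV_card_ge_0[where ?'a = 'a] by (simp flip: power_Suc)
  also have "(\<Prod>y\<in>UNIV-{0}. x * y) = (\<Prod>y\<in>UNIV-{0}. y)"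
    by (rule prod.reindex_bij_witness[of _ "\<lambda>y. y / x" "\<lambda>y. x * y"]) (use False in auto)
  finally show ?thesis by simp
qed (use finite_UNIV_card_ge_0[where ?'a = 'a] in auto)

lemma CHAR_eq_if_card_UNIV_eq_power:
  assumes "prime p" "card (UNIV :: 'a::{field,finite} set) = p ^ k"
  shows "CHAR('a) = p"
proof -
  have "prime CHAR('a)"
    using prime_CHAR_semidom finite_imp_CHAR_pos[OF finite_UNIV] by blast
  moreover have "CHAR('a) dvd p ^ k"
    using CHAR_dvd_CARD[where ?'a = 'a] assms(2) by simp
  ultimately show ?thesis
    using assms(1) prime_dvd_power primes_dvd_imp_eq by blast
qed

lemma numeral_neq_0_if_card_UNIV_eq_power:
  assumes "prime p" "card (UNIV :: 'a::{field,finite} set) = p ^ k" "\<not> p dvd numeral n"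
  shows "(numeral n :: 'a) \<noteq> 0"
  using assms of_nat_eq_0_iff_char_dvd[where ?'a = 'a, of "numeral n"]
  by (simp add: CHAR_eq_if_card_UNIV_eq_power)

lemma quadratic_form_power_nonzero:
  fixes u :: "'a::field"
  assumes "u \<noteq> 0" "(u ^ q) ^ q = u" "q mod 3 = 1" "(3::'a) \<noteq> 0"
  shows "u\<^sup>2 + u * u ^ q + (u ^ q)\<^sup>2 \<noteq> 0"
proof
  assume form: "u\<^sup>2 + u * u ^ q + (u ^ q)\<^sup>2 = 0"
  define t where "t = u ^ q / u"
  have t2: "t\<^sup>2 + t + 1 = 0"
    using form \<open>u \<noteq> 0\<close> unfolding t_def by (simp add: field_simps power2_eq_square)
  have "t ^ 3 - 1 = (t - 1) * (t\<^sup>2 + t + 1)"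
    by (simp add: algebra_simps power2_eq_square power3_eq_cube)
  then have t3: "t ^ 3 = 1"
    using t2 by simp
  have "t ^ (q + 1) = 1"
    using \<open>u \<noteq> 0\<close> assms(2) unfolding t_def power_divide
    by (simp add: power_add mult.commute flip: power_mult)
  moreover have "q + 1 = 3 * (q div 3) + 2"
    using assms(3) by presburger
  then have "t ^ (q + 1) = (t ^ 3) ^ (q div 3) * t\<^sup>2"
    by (simp only: power_add power_mult)
  ultimately have "t\<^sup>2 = 1"
    using t3 by simp
  then have "t = 1"
    using t3 by (simp add: power2_eq_square power3_eq_cube)
  then show False
    using t2 assms(4) by simp
qed

lemma field_involution_frobenius:
  assumes "prime p" "card (UNIV :: 'a::{field,finite} set) = (p ^ m)\<^sup>2"
  shows "field_involution (\<lambda>x::'a. x ^ (p ^ m))"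
proof
  have "CHAR('a) = p"
    using assms by (intro CHAR_eq_if_card_UNIV_eq_power[of p "m * 2"]) (simp_all add: power_mult)
  then show "(x + y) ^ (p ^ m) = x ^ (p ^ m) + y ^ (p ^ m)" for x y :: 'a
    using assms(1) by (intro freshmans_dream') simp_all
  show "(x * y) ^ (p ^ m) = x ^ (p ^ m) * y ^ (p ^ m)" for x y :: 'a
    by (rule power_mult_distrib)
  show "(1::'a) ^ (p ^ m) = 1"
    by simp
  show "(x ^ (p ^ m)) ^ (p ^ m) = x" for x :: 'a
    using power_card_UNIV_eq_self[of x] assms(2) by (simp add: power2_eq_square flip: power_mult)
qed

theorem proposition7:
  fixes p m q :: nat
  assumes "prime p" and "odd p" and "m \<ge> 1" and "q = p ^ m"
    and "q mod 6 = 1"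
    and "card (UNIV :: 'a::{field,finite} set) = q ^ 2"
  shows "boomerang_uniformity (\<lambda>x::'a. x ^ (q + 2)) \<le> 5"
proof -
  have card: "card (UNIV :: 'a set) = (p ^ m)\<^sup>2"
    using assms(4,6) by simp
  then have card': "card (UNIV :: 'a set) = p ^ (m * 2)"
    by (simp add: power_mult)
  interpret field_involution "\<lambda>x::'a. x ^ q"
    using field_involution_frobenius[OF assms(1) card] assms(4) by simp
  have "\<not> p dvd 2"
    using dvd_imp_le[of p 2] prime_ge_2_nat[OF assms(1)] assms(2) by auto
  moreover have "\<not> p dvd 3"
  proof
    assume "p dvd 3"
    have "p = 3"
      using dvd_imp_le[OF \<open>p dvd 3\<close>] prime_ge_2_nat[OF assms(1)] assms(2) by presburger
    then have "3 dvd q"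
      using assms(3,4) by (simp add: dvd_power)
    then show False
      using assms(5) by presburger
  qed
  ultimately have two: "(2::'a) \<noteq> 0" and three: "(3::'a) \<noteq> 0"
    using numeral_neq_0_if_card_UNIV_eq_power[OF assms(1) card'] by blast+
  have "q mod 3 = 1"
    using assms(5) by presburger
  then have "anisotropic"
    unfolding anisotropic_def using quadratic_form_power_nonzero[OF _ involutive _ three] by simp
  have f: "(\<lambda>x::'a. x ^ (q + 2)) = (\<lambda>x. x ^ q * x\<^sup>2)"
    by (simp only: power_add)
  have "boomerang_count (\<lambda>x::'a. x ^ (q + 2)) a b \<le> 5" if "a \<noteq> 0" "b \<noteq> 0" for a b
    unfolding f by (rule boomerang_count_le[OF \<open>anisotropic\<close> two that])
  then show ?thesis
    by (rule boomerang_uniformity_le)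
qed

end
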